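(* Let $n\ge 2$ and consider \textsc{OneMinMax}. Let $\mathrm{score}(x,P)$ be any diversity measure that is diversity-favouring on $\{0,1\}^n\setminus\{0^n,1^n\}$ with respect to \textsc{OneMinMax} (for example the hypervolume contribution with a reference point $(r_1,r_2)$ satisfying $r_1\le -1$, $r_2\le -1$, or the crowding distance contribution). Consider SEMO and GSEMO with diversity-based parent selection using this measure. Then the expected time to find the whole Pareto front of \textsc{OneMinMax} is $O(n\log n)$ when the parent selection mechanism is the exponential ranking scheme, the power law ranking scheme, or tournament selection with tournament size $\mu$; and it is $O(n\log^2 n)$ when the parent selection mechanism is the harmonic ranking scheme.
   Context: Search space $\{0,1\}^n$; both objectives are maximised. $\textsc{OneMinMax}(x)=(\sum_i x_i,\, n-\sum_i x_i)$. A point $y$ dominates $x$ if $f_i(y)\ge f_i(x)$ for all $i$ with strict inequality for some $i$; $y$ weakly dominates $x$ if $f_i(y)\ge f_i(x)$ for all $i$. The Pareto set $X^*$ is the set of non-dominated points and the Pareto front is $F^*=f(X^* )$; for \textsc{OneMinMax} every point is Pareto optimal. SEMO/GSEMO with diversity-based parent selection: choose $s\in\{0,1\}^n$ uniformly at random and set $P=\{s\}$. In each iteration: compute $\mathrm{score}(x,P)$ for every $x\in P$; choose a parent $s\in P$ according to the parent selection mechanism; create $s'$ by flipping one uniformly random bit of $s$ (SEMO) or by flipping each bit independently with probability $1/n$ (GSEMO); if $s'$ is not dominated by any member of $P$, add $s'$ to $P$ and remove all members of $P$ weakly dominated by $s'$. Let $\mu=|P|$. The time is the number of iterations (fitness evaluations)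 until $f(P)=F^*$. Good individuals: w.r.t. population $P$, a point $x\in P\cap X^*$ is good if it has a Hamming neighbour $y$ (Hamming distance 1) with $y\in X^*$ and $f(y)\notin f(P)$; otherwise bad. A measure $\mathrm{score}(x,P)$ is diversity-favouring on $S\subseteq\{0,1\}^n$ (w.r.t. $f$) if for every population $P$ and all $x,y\in P\cap X^*\cap S$ with $x$ bad and $y$ good, $\mathrm{score}(x,P)<\mathrm{score}(y,P)$. Hypervolume contribution (HVC) with reference point $(r_1,r_2)$: sort the (mutually non-dominated) population by increasing $f_1$ as $x_1,\dots,x_\mu$, set $f_1(x_0)=r_1$, $f_2(x_{\mu+1})=r_2$, and $\mathrm{HVC}(x_i,P)=(f_1(x_i)-f_1(x_{i-1}))(f_2(x_i)-f_2(x_{i+1}))$. Crowding distance contribution (CDC): all points start at 0; for each objective $m$, sort $P$ ascending by $f_m$, give the first and last points distance $\infty$, and add to each intermediate point $P[i]$ the value $(f_m(P[i+1])-f_m(P[i-1]))/(f_m^{\max}-f_m^{\min})$ where $f_m^{\max},f_m^{\min}$ are the maximum and minimum values of the $m$-th objective. Parent selection mechanisms: sort $P$ by non-increasing score; the $i$-th ranked individual is selected with probability $2^{-i}/\sum_{j=1}^\mu 2^{-j}$ (exponential), $i^{-2}/\sum_{j=1}^\mu j^{-2}$ (power law), or $i^{-1}/\sum_{j=1}^\mu j^{-1}$ (harmonic). Tournament selection with tournament size $\mu$: draw $\mu$ individuals uniformly at random with replacement from $P$ and select the one with highest score. *)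

theory Defs
  imports "HOL-Probability.Probability"
begin

type_synonym bits = "bool list"
type_synonym pop = "bool list set"

definition cube :: "nat \<Rightarrow> bits set" where
  "cube n = {x. length x = n}"

definition ones :: "bits \<Rightarrow> nat" where
  "ones x = count_list x True"

definition OneMinMax :: "nat \<Rightarrow> bits \<Rightarrow> int \<times> int" where
  "OneMinMax n x = (int (ones x), int n - int (ones x))"

definition weakly_dominates :: "(bits \<Rightarrow> int \<times> int) \<Rightarrow> bits \<Rightarrow> bits \<Rightarrow> bool" where
  "weakly_dominates f y x \<longleftrightarrow> fst (f y) \<ge> fst (f x) \<and> snd (f y) \<ge> snd (f x)"

definition dominates :: "(bits \<Rightarrow> int \<times> int) \<Rightarrow> bits \<Rightarrow> bits \<Rightarrow> bool" where
  "dominates f y x \<longleftrightarrow> weakly_dominates f y x \<and> (fst (f y) > fst (f x) \<or> snd (f y) > snd (f x))"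

definition pareto_set :: "nat \<Rightarrow> (bits \<Rightarrow> int \<times> int) \<Rightarrow> bits set" where
  "pareto_set n f = {x \<in> cube n. \<not> (\<exists>y \<in> cube n. dominates f y x)}"

definition pareto_front :: "nat \<Rightarrow> (bits \<Rightarrow> int \<times> int) \<Rightarrow> (int \<times> int) set" where
  "pareto_front n f = f ` pareto_set n f"

definition hamming :: "bits \<Rightarrow> bits \<Rightarrow> nat" where
  "hamming x y = card {i. i < length x \<and> x ! i \<noteq> y ! i}"

text \<open>A population: a nonempty set of length-n bit strings in which no member weakly
  dominates another member (the invariant maintained by (G)SEMO).\<close>
definition population :: "nat \<Rightarrow> (bits \<Rightarrow> int \<times> int) \<Rightarrow> pop \<Rightarrow> bool" where
  "population n f P \<longleftrightarrow> P \<noteq> {} \<and> P \<subseteq> cube n \<and>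
     (\<forall>x\<in>P. \<forall>y\<in>P. x \<noteq> y \<longrightarrow> \<not> weakly_dominates f x y)"

definition good :: "nat \<Rightarrow> (bits \<Rightarrow> int \<times> int) \<Rightarrow> pop \<Rightarrow> bits \<Rightarrow> bool" where
  "good n f P x \<longleftrightarrow> x \<in> P \<inter> pareto_set n f \<and>
     (\<exists>y. length y = length x \<and> hamming x y = 1 \<and> y \<in> pareto_set n f \<and> f y \<notin> f ` P)"

definition bad :: "nat \<Rightarrow> (bits \<Rightarrow> int \<times> int) \<Rightarrow> pop \<Rightarrow> bits \<Rightarrow> bool" where
  "bad n f P x \<longleftrightarrow> x \<in> P \<inter> pareto_set n f \<and> \<not> good n f P x"

text \<open>score P x stands for score(x,P).  Values in ereal so that e.g. the crowding
  distance (which takes the value infinity) is covered.\<close>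
definition diversity_favouring ::
  "nat \<Rightarrow> (bits \<Rightarrow> int \<times> int) \<Rightarrow> bits set \<Rightarrow> (pop \<Rightarrow> bits \<Rightarrow> ereal) \<Rightarrow> bool" where
  "diversity_favouring n f S score \<longleftrightarrow>
     (\<forall>P. population n f P \<longrightarrow>
        (\<forall>x y. x \<in> P \<inter> pareto_set n f \<inter> S \<longrightarrow> y \<in> P \<inter> pareto_set n f \<inter> S \<longrightarrow>
               bad n f P x \<longrightarrow> good n f P y \<longrightarrow> score P x < score P y))"

definition is_score_ranking :: "(pop \<Rightarrow> bits \<Rightarrow> ereal) \<Rightarrow> (pop \<Rightarrow> bits list) \<Rightarrow> bool" where
  "is_score_ranking score rk \<longleftrightarrow>
     (\<forall>P. finite P \<longrightarrow> distinct (rk P) \<and> set (rk P) = P \<and>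
        sorted_wrt (\<lambda>x y. score P x \<ge> score P y) (rk P))"

datatype mutation = SEMO | GSEMO
datatype selection = Exponential | PowerLaw | Harmonic | Tournament

definition flip_bit :: "nat \<Rightarrow> bits \<Rightarrow> bits" where
  "flip_bit i x = x[i := \<not> x ! i]"

fun bitwise_mutation :: "real \<Rightarrow> bits \<Rightarrow> bits pmf" where
  "bitwise_mutation p [] = return_pmf []"
| "bitwise_mutation p (b # bs) =
     bind_pmf (bernoulli_pmf p) (\<lambda>c. map_pmf (\<lambda>r. (if c then \<not> b else b) # r) (bitwise_mutation p bs))"

definition mutate :: "mutation \<Rightarrow> nat \<Rightarrow> bits \<Rightarrow> bits pmf" where
  "mutate m n x = (case m of
      SEMO \<Rightarrow> map_pmf (\<lambda>i. flip_bit i x) (pmf_of_set {..<n})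
    | GSEMO \<Rightarrow> bitwise_mutation (1 / real n) x)"

definition rank_weight :: "selection \<Rightarrow> nat \<Rightarrow> real" where
  "rank_weight s i = (case s of
      Exponential \<Rightarrow> (1/2) ^ i
    | PowerLaw \<Rightarrow> 1 / (real i)^2
    | Harmonic \<Rightarrow> 1 / real i
    | Tournament \<Rightarrow> 0)"

text \<open>Distribution of the 0-based index (rank - 1) of the selected individual.\<close>
definition ranking_pmf :: "(nat \<Rightarrow> real) \<Rightarrow> nat \<Rightarrow> nat pmf" where
  "ranking_pmf w \<mu> = embed_pmf (\<lambda>i. if i < \<mu> then w (Suc i) / (\<Sum>j=1..\<mu>. w j) else 0)"

text \<open>Minimum rank index among k uniform draws with replacement (sentinel \<mu> for k = 0).\<close>
fun min_of_draws :: "nat \<Rightarrow> nat \<Rightarrow> nat pmf" where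
  "min_of_draws 0 \<mu> = return_pmf \<mu>"
| "min_of_draws (Suc k) \<mu> =
     bind_pmf (pmf_of_set {..<\<mu>}) (\<lambda>a. map_pmf (min a) (min_of_draws k \<mu>))"

definition rank_index_pmf :: "selection \<Rightarrow> nat \<Rightarrow> nat pmf" where
  "rank_index_pmf s \<mu> = (case s of
      Tournament \<Rightarrow> min_of_draws \<mu> \<mu>
    | _ \<Rightarrow> ranking_pmf (rank_weight s) \<mu>)"

definition update :: "(bits \<Rightarrow> int \<times> int) \<Rightarrow> pop \<Rightarrow> bits \<Rightarrow> pop" where
  "update f P y = (if \<exists>z\<in>P. dominates f z y then P
                   else insert y {z \<in> P. \<not> weakly_dominates f y z})"

definition step ::
  "mutation \<Rightarrow> selection \<Rightarrow> nat \<Rightarrow> (bits \<Rightarrow> int \<times> int) \<Rightarrow> (pop \<Rightarrow> bits list) \<Rightarrow> pop \<Rightarrow> pop pmf" where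
  "step m s n f rk P =
     bind_pmf (map_pmf (\<lambda>i. rk P ! i) (rank_index_pmf s (card P)))
              (\<lambda>x. map_pmf (update f P) (mutate m n x))"

definition covers_front :: "nat \<Rightarrow> (bits \<Rightarrow> int \<times> int) \<Rightarrow> pop \<Rightarrow> bool" where
  "covers_front n f P \<longleftrightarrow> f ` P = pareto_front n f"

definition stopped_step ::
  "mutation \<Rightarrow> selection \<Rightarrow> nat \<Rightarrow> (bits \<Rightarrow> int \<times> int) \<Rightarrow> (pop \<Rightarrow> bits list) \<Rightarrow> pop \<Rightarrow> pop pmf" where
  "stopped_step m s n f rk P = (if covers_front n f P then return_pmf P else step m s n f rk P)"

definition init_pop :: "nat \<Rightarrow> pop pmf" where
  "init_pop n = map_pmf (\<lambda>x. {x}) (pmf_of_set (cube n))"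

definition pop_dist ::
  "mutation \<Rightarrow> selection \<Rightarrow> nat \<Rightarrow> (bits \<Rightarrow> int \<times> int) \<Rightarrow> (pop \<Rightarrow> bits list) \<Rightarrow> nat \<Rightarrow> pop pmf" where
  "pop_dist m s n f rk t = ((\<lambda>D. bind_pmf D (stopped_step m s n f rk)) ^^ t) (init_pop n)"

text \<open>E[T] = sum_{t>=0} Pr[T > t], T = number of iterations until f(P) = F*.\<close>
definition expected_time ::
  "mutation \<Rightarrow> selection \<Rightarrow> nat \<Rightarrow> (bits \<Rightarrow> int \<times> int) \<Rightarrow> (pop \<Rightarrow> bits list) \<Rightarrow> ennreal" where
  "expected_time m s n f rk =
     (\<Sum>t. ennreal (measure_pmf.prob (pop_dist m s n f rk t) {P. \<not> covers_front n f P}))"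

end

theory Submission
  imports Defs "HOL-Analysis.Harmonic_Numbers"
begin

(*
  Let c be a lower bound, uniform in the population size, on the probability that parent
  selection picks any fixed one of the three best-ranked individuals; c is a constant, except
  for harmonic ranking where c = Theta(1 / log n). Let d_j = min (j + 1) (n + 1 - j). An
  individual on a level next to j has at least d_j single-bit flips leading to level j, so
  mutation creates level j with probability at least d_j / (e n).

  While the front is not covered, one of the three best-ranked individuals is good. Among
  non-extreme individuals the diversity measure ranks good ones above bad ones, so at most the
  two extreme points precede the best-ranked good non-extreme individual; and if no non-extreme
  individual is good, the population occupies only the levels 0 and n, where every individual
  is good. Hence the potential (e n / c) * (sum of 1 / d_j over the uncovered levels j)
  decreases by at least 1 in expectation in every iteration, and additive drift bounds the
  expected time by its initial value, which is at most (e n / c) * 2 H(n + 1) = O(n log n / c).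
*)

section \<open>Probability and analysis\<close>

lemma prob_bind_pmf_ge: "pmf M x * measure_pmf.prob (K x) A \<le> measure_pmf.prob (bind_pmf M K) A"
proof -
  have "ennreal (measure_pmf.prob (K x) A * pmf M x) = (\<integral>\<^sup>+y. emeasure (K x) A * indicator {x} y \<partial>M)"
    by (simp add: measure_pmf.emeasure_eq_measure measure_pmf_single ennreal_mult)
  also have "\<dots> \<le> (\<integral>\<^sup>+y. emeasure (K y) A \<partial>M)"
    by (intro nn_integral_mono) (auto split: split_indicator)
  also have "\<dots> = emeasure (bind_pmf M K) A"
    by (rule emeasure_bind_pmf[symmetric])
  finally show ?thesis
    by (simp add: measure_pmf.emeasure_eq_measure mult.commute)
qed

lemma pmf_map_pmf_ge: "pmf M x \<le> pmf (map_pmf f M) (f x)"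
proof -
  have "measure M {x} \<le> measure M (f -` {f x})"
    by (intro measure_pmf.finite_measure_mono) auto
  then show ?thesis
    by (simp add: pmf_map measure_pmf_single)
qed

lemma additive_drift_hitting_time:
  fixes K :: "'a \<Rightarrow> 'a pmf" and \<Phi> :: "'a \<Rightarrow> ennreal"
  assumes init: "\<And>x. x \<in> set_pmf D0 \<Longrightarrow> I x"
    and invariant: "\<And>x y. I x \<Longrightarrow> y \<in> set_pmf (K x) \<Longrightarrow> I y"
    and drift: "\<And>x. I x \<Longrightarrow> \<not> T x \<Longrightarrow> (\<integral>\<^sup>+y. \<Phi> y \<partial>K x) + 1 \<le> \<Phi> x"
    and stopped: "\<And>x. I x \<Longrightarrow> T x \<Longrightarrow> (\<integral>\<^sup>+y. \<Phi> y \<partial>K x) \<le> \<Phi> x"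
    and bounded: "\<And>x. I x \<Longrightarrow> \<Phi> x \<le> B"
  shows "(\<Sum>t. ennreal (measure_pmf.prob (((\<lambda>D. bind_pmf D K) ^^ t) D0) {x. \<not> T x})) \<le> B"
proof -
  define D where "D t = ((\<lambda>D. bind_pmf D K) ^^ t) D0" for t
  define E where "E t = (\<integral>\<^sup>+x. \<Phi> x \<partial>D t)" for t
  define p where "p t = ennreal (measure_pmf.prob (D t) {x. \<not> T x})" for t
  have D_Suc: "D (Suc t) = bind_pmf (D t) K" for t
    by (simp add: D_def)
  have reachable: "I x" if "x \<in> set_pmf (D t)" for x t
    using that by (induction t arbitrary: x) (auto simp: D_def init intro: invariant)
  have E_Suc: "E (Suc t) + p t \<le> E t" for t
  proof -
    have "E (Suc t) + p t = (\<integral>\<^sup>+x. (\<integral>\<^sup>+y. \<Phi> y \<partial>K x) + indicator {x. \<not> T x} x \<partial>D t)"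
      by (simp add: E_def p_def D_Suc nn_integral_add measure_pmf.emeasure_eq_measure[symmetric])
    also have "\<dots> \<le> E t"
      unfolding E_def using drift stopped reachable
      by (intro nn_integral_mono_AE) (auto simp: AE_measure_pmf_iff split: split_indicator)
    finally show ?thesis .
  qed
  have telescope: "(\<Sum>t<N. p t) + E N \<le> E 0" for N
  proof (induction N)
    case (Suc N)
    have "(\<Sum>t<Suc N. p t) + E (Suc N) = (\<Sum>t<N. p t) + (E (Suc N) + p N)"
      by (simp add: ac_simps)
    also have "\<dots> \<le> (\<Sum>t<N. p t) + E N"
      using E_Suc by (intro add_left_mono)
    finally show ?case using Suc.IH by order
  qed simp
  have "E 0 \<le> (\<integral>\<^sup>+x. B \<partial>D 0)"
    unfolding E_def using bounded reachable by (intro nn_integral_mono_AE) (auto simp: AE_measure_pmf_iff)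
  then have "E 0 \<le> B"
    by (simp add: measure_pmf.emeasure_space_1)
  then have "(\<Sum>t<N. p t) \<le> B" for N
    using telescope[of N] by (meson add_increasing2 le_iff_add order_trans zero_le)
  then show ?thesis
    unfolding p_def D_def by (intro suminf_le_const) auto
qed

lemma one_minus_power_ge_exp:
  fixes x :: real
  assumes "0 \<le> x" "x < 1"
  shows "exp (- x * real N / (1 - x)) \<le> (1 - x) ^ N"
proof -
  have "1 / (1 - x) = 1 + x / (1 - x)"
    using assms by (simp add: field_simps)
  also have "\<dots> \<le> exp (x / (1 - x))"
    by (rule exp_ge_add_one_self)
  finally have "(1 / (1 - x)) ^ N \<le> exp (x / (1 - x)) ^ N"
    using assms by (intro power_mono) auto
  also have "\<dots> = exp (x * real N / (1 - x))"
    by (simp add: exp_of_nat_mult[symmetric] mult.commute)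
  finally show ?thesis
    using assms by (simp add: exp_minus power_one_over field_simps)
qed

lemma one_minus_inverse_power_ge: "1 \<le> n \<Longrightarrow> exp (-1) \<le> (1 - 1 / real n) ^ (n - 1)"
proof (cases "n = 1")
  case False
  assume "1 \<le> n"
  then have n: "2 \<le> real n"
    using False by linarith
  have e: "- (1 / real n) * real (n - 1) / (1 - 1 / real n) = -1"
    using n by (simp add: of_nat_diff field_simps)
  have "exp (- (1 / real n) * real (n - 1) / (1 - 1 / real n)) \<le> (1 - 1 / real n) ^ (n - 1)"
    using n by (intro one_minus_power_ge_exp) auto
  then show ?thesis
    unfolding e .
qed simp

lemma one_minus_three_div_power_ge: "4 \<le> \<mu> \<Longrightarrow> exp (-9) \<le> (1 - 3 / real \<mu>) ^ (\<mu> - 1)"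
proof -
  assume \<mu>: "4 \<le> \<mu>"
  have "- 9 \<le> - (3 / real \<mu>) * real (\<mu> - 1) / (1 - 3 / real \<mu>)"
    using \<mu> by (simp add: of_nat_diff field_simps)
  moreover have "exp (- (3 / real \<mu>) * real (\<mu> - 1) / (1 - 3 / real \<mu>)) \<le> (1 - 3 / real \<mu>) ^ (\<mu> - 1)"
    using \<mu> by (intro one_minus_power_ge_exp) auto
  ultimately show ?thesis
    by (meson exp_le_cancel_iff order_trans)
qed

lemma power_diff_ge:
  fixes a b :: real
  assumes "0 \<le> b" "b \<le> a"
  shows "(a - b) * real (Suc N) * b ^ N \<le> a ^ Suc N - b ^ Suc N"
proof -
  have "(\<Sum>p<Suc N. b ^ N) \<le> (\<Sum>p<Suc N. a ^ p * b ^ (N - p))"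
  proof (intro sum_mono)
    fix p assume "p \<in> {..<Suc N}"
    then have "b ^ N = b ^ p * b ^ (N - p)"
      by (simp flip: power_add)
    also have "\<dots> \<le> a ^ p * b ^ (N - p)"
      using assms by (intro mult_right_mono power_mono) auto
    finally show "b ^ N \<le> a ^ p * b ^ (N - p)" .
  qed
  then have "(a - b) * (\<Sum>p<Suc N. b ^ N) \<le> (a - b) * (\<Sum>p<Suc N. a ^ p * b ^ (N - p))"
    using assms by (intro mult_left_mono) auto
  moreover have "a ^ Suc N - b ^ Suc N = (a - b) * (\<Sum>p<Suc N. a ^ p * b ^ (N - p))"
    by (rule diff_power_eq_sum)
  ultimately show ?thesis
    by (simp add: mult.assoc)
qed

lemma harm_le_ln_plus_1: "0 < n \<Longrightarrow> harm n \<le> ln (real n) + (1::real)"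
  using euler_mascheroni_sequence_decreasing[of 1 n] by (simp add: harm_def)

section \<open>Bit strings and OneMinMax\<close>

lemma ones_eq_card: "ones x = card {i. i < length x \<and> x ! i}"
  unfolding ones_def count_list_eq_length_filter length_filter_conv_card by simp

lemma ones_le_length: "ones x \<le> length x"
  unfolding ones_def count_list_eq_length_filter by simp

lemma card_zeros: "card {i. i < length x \<and> \<not> x ! i} = length x - ones x"
proof -
  have "{i. i < length x \<and> \<not> x ! i} = {..<length x} - {i. i < length x \<and> x ! i}"
    by auto
  then show ?thesis
    by (simp add: ones_eq_card card_Diff_subset subset_iff)
qed

lemma ones_replicate: "ones (replicate k b) = (if b then k else 0)"
  by (induction k) (auto simp: ones_def)

lemma length_flip_bit [simp]: "length (flip_bit i x) = length x"
  by (simp add: flip_bit_def)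

lemma ones_flip_bit_True:
  assumes "i < length x" "x ! i"
  shows "ones (flip_bit i x) + 1 = ones x"
proof -
  have "{l. l < length x \<and> flip_bit i x ! l} = {l. l < length x \<and> x ! l} - {i}"
    using assms by (auto simp: flip_bit_def nth_list_update)
  then show ?thesis
    using assms by (simp add: ones_eq_card card_Suc_Diff1 del: card_Diff_insert)
qed

lemma ones_flip_bit_False:
  assumes "i < length x" "\<not> x ! i"
  shows "ones (flip_bit i x) = ones x + 1"
proof -
  have "{l. l < length x \<and> flip_bit i x ! l} = insert i {l. l < length x \<and> x ! l}"
    using assms by (auto simp: flip_bit_def nth_list_update)
  then show ?thesis
    using assms by (simp add: ones_eq_card)
qed

lemma hamming_flip_bit: "i < length x \<Longrightarrow> hamming x (flip_bit i x) = 1"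
proof -
  assume "i < length x"
  then have "{l. l < length x \<and> x ! l \<noteq> flip_bit i x ! l} = {i}"
    by (auto simp: flip_bit_def nth_list_update)
  then show ?thesis
    by (simp add: hamming_def)
qed

lemma hamming_eq_1_imp_flip_bit:
  assumes "length y = length x" "hamming x y = 1"
  obtains i where "i < length x" "y = flip_bit i x"
proof -
  from assms(2) obtain i where i: "{l. l < length x \<and> x ! l \<noteq> y ! l} = {i}"
    unfolding hamming_def by (auto simp: card_Suc_eq)
  have "y = flip_bit i x"
  proof (rule nth_equalityI)
    fix l assume "l < length y"
    then show "y ! l = flip_bit i x ! l"
      using i assms(1) by (cases "l = i") (auto simp: flip_bit_def nth_list_update)
  qed (simp add: assms(1))
  with i show thesis
    using that by blast
qed

lemma inj_on_flip_bit: "inj_on (\<lambda>i. flip_bit i x) {..<length x}"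
  by (intro inj_onI) (metis flip_bit_def lessThan_iff nth_list_update_eq nth_list_update_neq)

definition flips_to_level :: "nat \<Rightarrow> nat \<Rightarrow> nat" where
  "flips_to_level n j = min (j + 1) (n + 1 - j)"

lemma card_flips_to_level_ge:
  assumes adjacent: "j + 1 = ones x \<or> j = ones x + 1" and "j \<le> length x"
  shows "flips_to_level (length x) j \<le> card {i. i < length x \<and> ones (flip_bit i x) = j}"
proof (cases "j + 1 = ones x")
  case True
  then have "{i. i < length x \<and> x ! i} \<subseteq> {i. i < length x \<and> ones (flip_bit i x) = j}"
    using ones_flip_bit_True by fastforce
  then have "ones x \<le> card {i. i < length x \<and> ones (flip_bit i x) = j}"
    unfolding ones_eq_card by (intro card_mono) auto
  then show ?thesis
    using True by (simp add: flips_to_level_def)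
next
  case False
  then have "{i. i < length x \<and> \<not> x ! i} \<subseteq> {i. i < length x \<and> ones (flip_bit i x) = j}"
    using adjacent ones_flip_bit_False by fastforce
  then have "length x - ones x \<le> card {i. i < length x \<and> ones (flip_bit i x) = j}"
    unfolding card_zeros[symmetric] by (intro card_mono) auto
  then show ?thesis
    using False adjacent by (simp add: flips_to_level_def)
qed

lemma finite_cube: "finite (cube n)"
  unfolding cube_def using finite_lists_length_eq[of "UNIV :: bool set" n] by simp

lemma ones_image_cube: "ones ` cube n = {0..n}"
proof
  show "ones ` cube n \<subseteq> {0..n}"
    using ones_le_length by (auto simp: cube_def)
  show "{0..n} \<subseteq> ones ` cube n"
  proof
    fix k assume "k \<in> {0..n}"
    then have "replicate k True @ replicate (n - k) False \<in> cube n"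
      by (simp add: cube_def)
    moreover have "ones (replicate k True @ replicate (n - k) False) = k"
      using ones_replicate[of k True] by (simp add: ones_def)
    ultimately show "k \<in> ones ` cube n"
      by (metis image_eqI)
  qed
qed

lemma not_dominates_OneMinMax: "\<not> dominates (OneMinMax n) y x"
  by (auto simp: dominates_def weakly_dominates_def OneMinMax_def)

lemma weakly_dominates_OneMinMax_iff: "weakly_dominates (OneMinMax n) y x \<longleftrightarrow> ones y = ones x"
  by (auto simp: weakly_dominates_def OneMinMax_def)

lemma pareto_set_OneMinMax: "pareto_set n (OneMinMax n) = cube n"
  by (auto simp: pareto_set_def not_dominates_OneMinMax)

lemma OneMinMax_in_image_iff: "OneMinMax n x \<in> OneMinMax n ` P \<longleftrightarrow> ones x \<in> ones ` P"
  by (auto simp: OneMinMax_def)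

lemma update_OneMinMax: "update (OneMinMax n) P y = insert y {z \<in> P. ones z \<noteq> ones y}"
  by (simp add: update_def not_dominates_OneMinMax weakly_dominates_OneMinMax_iff eq_commute)

lemma ones_image_update: "ones ` update (OneMinMax n) P y = insert (ones y) (ones ` P)"
  unfolding update_OneMinMax by auto

lemma population_OneMinMax_iff:
  "population n (OneMinMax n) P \<longleftrightarrow> P \<noteq> {} \<and> P \<subseteq> cube n \<and> inj_on ones P"
  by (auto simp: population_def weakly_dominates_OneMinMax_iff inj_on_def)

lemma card_population_le:
  assumes "population n (OneMinMax n) P"
  shows "card P \<le> n + 1"
proof -
  have "card P = card (ones ` P)"
    using assms by (simp add: population_OneMinMax_iff card_image)
  also have "\<dots> \<le> card (ones ` cube n)"
    using assms by (intro card_mono) (auto simp: population_OneMinMax_iff finite_cube)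
  finally show ?thesis
    by (simp add: ones_image_cube)
qed

lemma population_update:
  "population n (OneMinMax n) P \<Longrightarrow> z \<in> cube n \<Longrightarrow>
    population n (OneMinMax n) (update (OneMinMax n) P z)"
  by (auto simp: population_OneMinMax_iff update_OneMinMax inj_on_def)

lemma covers_front_OneMinMax_iff:
  assumes "P \<subseteq> cube n"
  shows "covers_front n (OneMinMax n) P \<longleftrightarrow> ones ` P = {0..n}"
proof -
  define g where "g k = (int k, int n - int k)" for k :: nat
  have image: "OneMinMax n ` A = g ` ones ` A" for A
    by (auto simp: OneMinMax_def g_def image_image)
  have "inj g"
    by (auto simp: inj_def g_def)
  then show ?thesis
    by (simp add: covers_front_def pareto_front_def pareto_set_OneMinMax image inj_image_eq_iff
        ones_image_cube)
qed

lemma good_OneMinMax_iff: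
  assumes P: "P \<subseteq> cube n"
  shows "good n (OneMinMax n) P x \<longleftrightarrow>
    x \<in> P \<and> (\<exists>j\<le>n. j \<notin> ones ` P \<and> (j + 1 = ones x \<or> j = ones x + 1))"
proof
  assume "good n (OneMinMax n) P x"
  then obtain y where x: "x \<in> P" and y: "length y = length x" "hamming x y = 1" "y \<in> cube n"
      "ones y \<notin> ones ` P"
    by (auto simp: good_def pareto_set_OneMinMax OneMinMax_in_image_iff)
  from y(1,2) obtain i where "i < length x" "y = flip_bit i x"
    by (rule hamming_eq_1_imp_flip_bit)
  then have "ones y + 1 = ones x \<or> ones y = ones x + 1"
    using ones_flip_bit_True ones_flip_bit_False by blast
  moreover have "ones y \<le> n"
    using y(3) ones_le_length[of y] by (simp add: cube_def)
  ultimately show "x \<in> P \<and> (\<exists>j\<le>n. j \<notin> ones ` P \<and> (j + 1 = ones x \<or> j = ones x + 1))"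
    using x y(4) by blast
next
  assume "x \<in> P \<and> (\<exists>j\<le>n. j \<notin> ones ` P \<and> (j + 1 = ones x \<or> j = ones x + 1))"
  then obtain j where x: "x \<in> P" and j: "j \<le> n" "j \<notin> ones ` P" "j + 1 = ones x \<or> j = ones x + 1"
    by blast
  have len: "length x = n"
    using x P by (auto simp: cube_def)
  have "0 < card {i. i < length x \<and> ones (flip_bit i x) = j}"
    using card_flips_to_level_ge[OF j(3)] j(1) len by (simp add: flips_to_level_def)
  then obtain i where i: "i < length x" "ones (flip_bit i x) = j"
    by (auto dest: card_gt_0_iff[THEN iffD1])
  then have "length (flip_bit i x) = length x" "hamming x (flip_bit i x) = 1" "flip_bit i x \<in> cube n"
      "OneMinMax n (flip_bit i x) \<notin> OneMinMax n ` P"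
    using hamming_flip_bit len j(2) by (auto simp: cube_def OneMinMax_in_image_iff)
  then show "good n (OneMinMax n) P x"
    using x P unfolding good_def pareto_set_OneMinMax by blast
qed

section \<open>Mutation\<close>

lemma pmf_map_Cons: "pmf (map_pmf ((#) b) M) (c # ys) = (if b = c then pmf M ys else 0)"
proof (cases "b = c")
  case True
  have "inj ((#) b)"
    by (auto simp: inj_def)
  then show ?thesis
    using True by (simp add: pmf_map_inj')
next
  case False
  then have "c # ys \<notin> (#) b ` set_pmf M"
    by auto
  then show ?thesis
    using False by (simp add: pmf_map_outside)
qed

lemma pmf_map_Cons_Nil: "pmf (map_pmf ((#) b) M) [] = 0"
  by (rule pmf_map_outside) auto

lemma pmf_bitwise_mutation:
  assumes "0 \<le> p" "p \<le> 1"
  shows "pmf (bitwise_mutation p x) y = (if length y = length x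
    then prod_list (map2 (\<lambda>a b. if a = b then 1 - p else p) x y) else 0)"
proof (induction x arbitrary: y)
  case (Cons b bs)
  show ?case
  proof (cases y)
    case (Cons c ys)
    have "pmf (bitwise_mutation p (b # bs)) y =
        p * pmf (map_pmf ((#) (\<not> b)) (bitwise_mutation p bs)) (c # ys)
        + (1 - p) * pmf (map_pmf ((#) b) (bitwise_mutation p bs)) (c # ys)"
      using assms Cons by (simp add: pmf_bind)
    also have "\<dots> = (if b = c then 1 - p else p) * pmf (bitwise_mutation p bs) ys"
      unfolding pmf_map_Cons by auto
    finally show ?thesis
      using Cons Cons.IH[of ys] by simp
  qed (simp add: pmf_bind pmf_map_Cons_Nil)
qed (simp add: indicator_def)

lemma prod_list_map2_flip_bit:
  "i < length x \<Longrightarrow>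
    prod_list (map2 (\<lambda>a b. if a = b then 1 - p else p) x (flip_bit i x)) = p * (1 - p :: real) ^ (length x - 1)"
proof (induction x arbitrary: i)
  case (Cons a xs)
  have same: "prod_list (map2 (\<lambda>a b. if a = b then 1 - p else p) xs xs) = (1 - p) ^ length xs"
    by (induction xs) auto
  show ?case
  proof (cases i)
    case (Suc i')
    then have "i' < length xs"
      using Cons.prems by simp
    moreover from this obtain k where "length xs = Suc k"
      by (cases xs) auto
    ultimately show ?thesis
      using Cons.IH[of i'] Suc by (simp add: flip_bit_def mult_ac)
  qed (simp add: flip_bit_def same)
qed simp

lemma prob_bitwise_mutation_flip_bits:
  fixes p :: real
  assumes "0 \<le> p" "p \<le> 1" "I \<subseteq> {..<length x}"
  shows "measure_pmf.prob (bitwise_mutation p x) ((\<lambda>i. flip_bit i x) ` I)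
    = card I * (p * (1 - p) ^ (length x - 1))"
proof -
  have "measure_pmf.prob (bitwise_mutation p x) ((\<lambda>i. flip_bit i x) ` I)
      = (\<Sum>i\<in>I. pmf (bitwise_mutation p x) (flip_bit i x))"
    using assms(3) inj_on_subset[OF inj_on_flip_bit assms(3)] finite_subset[OF assms(3)]
    by (simp add: measure_measure_pmf_finite sum.reindex)
  also have "\<dots> = card I * (p * (1 - p) ^ (length x - 1))"
    using assms by (simp add: pmf_bitwise_mutation prod_list_map2_flip_bit subset_iff)
  finally show ?thesis .
qed

lemma prob_mutate_level_ge:
  assumes n: "1 \<le> n" and len: "length x = n"
    and j: "j + 1 = ones x \<or> j = ones x + 1" "j \<le> n"
  shows "flips_to_level n j / (exp 1 * n) \<le> measure_pmf.prob (mutate m n x) {z. ones z = j}"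
proof -
  define I where "I = {i. i < n \<and> ones (flip_bit i x) = j}"
  have I: "I \<subseteq> {..<n}" "flips_to_level n j \<le> card I"
    using card_flips_to_level_ge[OF j(1)] j(2) len by (auto simp: I_def)
  show ?thesis
  proof (cases m)
    case SEMO
    have "flips_to_level n j / (exp 1 * n) \<le> card I / n"
      using I(2) n by (intro frac_le) (auto simp: mult_le_cancel_right1)
    also have "\<dots> = measure_pmf.prob (pmf_of_set {..<n}) {i. ones (flip_bit i x) = j}"
      using n by (simp add: measure_pmf_of_set lessThan_empty_iff Int_def I_def)
    also have "\<dots> = measure_pmf.prob (mutate m n x) {z. ones z = j}"
      using SEMO by (simp add: mutate_def vimage_def)
    finally show ?thesis .
  next
    case GSEMO
    define p where "p = 1 / real n"
    have p: "0 \<le> p" "p \<le> 1"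
      using n by (auto simp: p_def)
    have mutate: "mutate m n x = bitwise_mutation p x"
      using GSEMO by (simp add: mutate_def p_def)
    have "flips_to_level n j / (exp 1 * n) \<le> card I / (exp 1 * n)"
      using I(2) by (intro divide_right_mono) auto
    also have "\<dots> = card I * (p * exp (-1))"
      by (simp add: p_def exp_minus field_simps)
    also have "\<dots> \<le> card I * (p * (1 - p) ^ (n - 1))"
      using one_minus_inverse_power_ge[OF n] p by (intro mult_left_mono) (auto simp: p_def)
    also have "\<dots> = measure_pmf.prob (bitwise_mutation p x) ((\<lambda>i. flip_bit i x) ` I)"
      using I(1) len by (simp add: prob_bitwise_mutation_flip_bits[OF p])
    also have "\<dots> \<le> measure_pmf.prob (bitwise_mutation p x) {z. ones z = j}"
      by (intro measure_pmf.finite_measure_mono) (auto simp: I_def)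
    finally show ?thesis
      unfolding mutate .
  qed
qed

lemma length_bitwise_mutation: "z \<in> set_pmf (bitwise_mutation p x) \<Longrightarrow> length z = length x"
  by (induction x arbitrary: z) auto

lemma length_mutate: "z \<in> set_pmf (mutate m n x) \<Longrightarrow> length x = n \<Longrightarrow> length z = n"
  by (cases m) (auto simp: mutate_def dest: length_bitwise_mutation)

section \<open>Parent selection\<close>

lemma pmf_ranking_pmf:
  assumes nonneg: "\<And>j. 0 \<le> w j" and pos: "0 < (\<Sum>j=1..\<mu>. w j)"
  shows "pmf (ranking_pmf w \<mu>) i = (if i < \<mu> then w (Suc i) / (\<Sum>j=1..\<mu>. w j) else 0)"
proof -
  define S where "S = (\<Sum>j=1..\<mu>. w j)"
  define f where "f i = (if i < \<mu> then w (Suc i) / S else 0)" for i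
  have f_nonneg: "0 \<le> f i" for i
    using nonneg pos by (simp add: f_def S_def)
  have "(\<Sum>i<\<mu>. f i) = (\<Sum>i<\<mu>. w (Suc i)) / S"
    by (simp add: f_def sum_divide_distrib)
  also have "\<dots> = 1"
    using pos by (simp add: S_def sum.atLeast1_atMost_eq)
  finally have "(\<Sum>i<\<mu>. ennreal (f i)) = 1"
    using f_nonneg by (simp add: sum_ennreal)
  then have "(\<integral>\<^sup>+i. ennreal (f i) \<partial>count_space UNIV) = 1"
    by (subst nn_integral_count_space'[of "{..<\<mu>}"]) (auto simp: f_def)
  then show ?thesis
    unfolding ranking_pmf_def f_def[symmetric] S_def[symmetric]
    by (subst pmf_embed_pmf[OF f_nonneg]) (simp_all add: f_def)
qed

lemma pmf_ranking_pmf_ge: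
  assumes nonneg: "\<And>j. 0 \<le> w j" and "i < \<mu>"
    and pos: "0 < (\<Sum>j=1..\<mu>. w j)" and le: "(\<Sum>j=1..\<mu>. w j) \<le> B"
  shows "w (Suc i) / B \<le> pmf (ranking_pmf w \<mu>) i"
  using assms by (simp add: pmf_ranking_pmf frac_le)

lemma sum_power_half: "(\<Sum>j=1..\<mu>. (1/2::real) ^ j) = 1 - (1/2) ^ \<mu>"
  by (induction \<mu>) (auto simp: field_simps)

lemma sum_inverse_squares_le: "1 \<le> \<mu> \<Longrightarrow> (\<Sum>j=1..\<mu>. 1 / real j ^ 2) \<le> 2 - 1 / real \<mu>"
proof (induction \<mu> rule: dec_induct)
  case (step m)
  have "1 / real (Suc m) ^ 2 \<le> 1 / (real m * real (Suc m))"
    using step.hyps by (intro divide_left_mono) (auto simp: power2_eq_square)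
  also have "\<dots> = 1 / real m - 1 / real (Suc m)"
    using step.hyps by (simp add: field_simps)
  finally show ?case
    using step.IH by simp
qed simp

lemma sum_inverse_squares_le_2: "(\<Sum>j=1..\<mu>. 1 / real j ^ 2) \<le> 2"
proof (cases "\<mu> = 0")
  case False
  have "0 \<le> 1 / real \<mu>"
    by simp
  then show ?thesis
    using sum_inverse_squares_le[of \<mu>] False by linarith
qed simp

lemma sum_inverse_le_ln: "\<mu> \<le> n + 1 \<Longrightarrow> (\<Sum>j=1..\<mu>. 1 / real j) \<le> ln (real n + 1) + 1"
proof -
  assume "\<mu> \<le> n + 1"
  then have "harm \<mu> \<le> (harm (n + 1) :: real)"
    by (rule harm_mono)
  also have "\<dots> \<le> ln (real n + 1) + 1"
    using harm_le_ln_plus_1[of "n + 1"] by (simp add: add.commute)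
  finally show ?thesis
    by (simp add: harm_def divide_inverse)
qed

lemma prob_min_of_draws_ge:
  assumes "0 < \<mu>" "i \<le> \<mu>"
  shows "emeasure (min_of_draws k \<mu>) {a. i \<le> a} = ennreal ((real (\<mu> - i) / real \<mu>) ^ k)"
proof (induction k)
  case (Suc k)
  define q where "q = (real (\<mu> - i) / real \<mu>) ^ k"
  have q: "0 \<le> q"
    by (simp add: q_def)
  have "emeasure (map_pmf (min a) (min_of_draws k \<mu>)) {a. i \<le> a} = (if i \<le> a then ennreal q else 0)"
    for a
  proof -
    have "min a -` {a. i \<le> a} = (if i \<le> a then {a. i \<le> a} else {})"
      by auto
    then show ?thesis
      using Suc.IH by (simp add: map_pmf_rep_eq emeasure_distr q_def)
  qed
  then have "emeasure (min_of_draws (Suc k) \<mu>) {a. i \<le> a}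
      = (\<integral>\<^sup>+a. (if i \<le> a then ennreal q else 0) \<partial>pmf_of_set {..<\<mu>})"
    by simp
  also have "\<dots> = (\<Sum>a<\<mu>. if i \<le> a then ennreal q else 0) / of_nat \<mu>"
    using assms by (subst nn_integral_pmf_of_set) (auto simp: lessThan_empty_iff)
  also have "(\<Sum>a<\<mu>. if i \<le> a then ennreal q else 0) = (\<Sum>a\<in>{i..<\<mu>}. ennreal q)"
    by (rule sum.mono_neutral_cong_right) auto
  also have "\<dots> = ennreal (real (\<mu> - i) * q)"
    using q by (simp add: ennreal_of_nat_eq_real_of_nat ennreal_mult)
  also have "\<dots> / of_nat \<mu> = ennreal (real (\<mu> - i) * q / real \<mu>)"
    using assms q by (simp add: ennreal_of_nat_eq_real_of_nat divide_ennreal)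
  also have "real (\<mu> - i) * q / real \<mu> = (real (\<mu> - i) / real \<mu>) ^ Suc k"
    by (simp add: q_def)
  finally show ?case .
qed (use assms in \<open>simp add: measure_pmf.emeasure_eq_measure\<close>)

lemma pmf_min_of_draws:
  assumes "0 < \<mu>" "i < \<mu>"
  shows "pmf (min_of_draws k \<mu>) i = (real (\<mu> - i) / real \<mu>) ^ k - (real (\<mu> - Suc i) / real \<mu>) ^ k"
proof -
  have "{a. i \<le> a} = {i} \<union> {a. Suc i \<le> a}"
    by auto
  then have "emeasure (min_of_draws k \<mu>) {a. i \<le> a}
      = emeasure (min_of_draws k \<mu>) {i} + emeasure (min_of_draws k \<mu>) {a. Suc i \<le> a}"
    by (simp add: plus_emeasure)
  then show ?thesis
    using assms by (simp add: prob_min_of_draws_ge emeasure_pmf_single ennreal_plus[symmetric] del: ennreal_plus)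
qed

lemma power_div_diff_ge:
  assumes "i < \<mu>"
  shows "(real (\<mu> - Suc i) / real \<mu>) ^ (\<mu> - 1)
    \<le> (real (\<mu> - i) / real \<mu>) ^ \<mu> - (real (\<mu> - Suc i) / real \<mu>) ^ \<mu>"
proof -
  define a where "a = real (\<mu> - i) / real \<mu>"
  define b where "b = real (\<mu> - Suc i) / real \<mu>"
  have "b \<le> a" "a - b = 1 / real \<mu>"
    using assms by (simp_all add: a_def b_def divide_right_mono of_nat_diff field_simps)
  then have "(a - b) * real \<mu> * b ^ (\<mu> - 1) \<le> a ^ \<mu> - b ^ \<mu>"
    using power_diff_ge[of b a "\<mu> - 1"] assms by (simp add: b_def)
  then show ?thesis
    using \<open>a - b = 1 / real \<mu>\<close> assms by (simp add: a_def b_def)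
qed

lemma tournament_lower_bound:
  assumes "i < \<mu>" "i \<le> 2"
  shows "exp (-9) / 27 \<le> (real (\<mu> - i) / real \<mu>) ^ \<mu> - (real (\<mu> - Suc i) / real \<mu>) ^ \<mu>"
proof -
  define a where "a = real (\<mu> - i) / real \<mu>"
  define b where "b = real (\<mu> - Suc i) / real \<mu>"
  have main: "b ^ (\<mu> - 1) \<le> a ^ \<mu> - b ^ \<mu>"
    unfolding a_def b_def using assms(1) by (rule power_div_diff_ge)
  have exp_9: "exp (-9) \<le> (1::real)"
    by simp
  consider "\<mu> = Suc i" | "Suc i < \<mu>" "\<mu> \<le> 3" | "4 \<le> \<mu>"
    using assms by linarith
  then have "exp (-9) / 27 \<le> a ^ \<mu> - b ^ \<mu>"
  proof cases
    case 1
    have "(1/3::real) ^ 3 \<le> (1/3) ^ \<mu>"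
      using 1 assms by (intro power_decreasing) auto
    also have "\<dots> \<le> (1 / real \<mu>) ^ \<mu>"
      using 1 assms by (intro power_mono) auto
    also have "\<dots> = a ^ \<mu> - b ^ \<mu>"
      using 1 by (simp add: a_def b_def)
    finally have "1 / 27 \<le> a ^ \<mu> - b ^ \<mu>"
      by (simp add: power3_eq_cube)
    then show ?thesis
      using exp_9 by linarith
  next
    case 2
    then have "1/3 \<le> b"
      by (simp add: b_def field_simps)
    have "(1/3::real) ^ 2 \<le> (1/3) ^ (\<mu> - 1)"
      using 2 by (intro power_decreasing) auto
    also have "\<dots> \<le> b ^ (\<mu> - 1)"
      using \<open>1/3 \<le> b\<close> by (intro power_mono) auto
    finally have "(1/3) ^ 2 \<le> b ^ (\<mu> - 1)" .
    then have "1 / 9 \<le> b ^ (\<mu> - 1)"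
      by (simp add: power2_eq_square)
    then show ?thesis
      using main exp_9 by linarith
  next
    case 3
    have "exp (-9) \<le> (1 - 3 / real \<mu>) ^ (\<mu> - 1)"
      using 3 by (rule one_minus_three_div_power_ge)
    also have "\<dots> \<le> b ^ (\<mu> - 1)"
      using 3 assms by (intro power_mono) (simp_all add: b_def of_nat_diff field_simps)
    finally have "exp (-9) \<le> b ^ (\<mu> - 1)" .
    then show ?thesis
      using main exp_gt_zero[of "-9"] by linarith
  qed
  then show ?thesis
    by (simp add: a_def b_def)
qed

definition top_rank_prob :: "selection \<Rightarrow> nat \<Rightarrow> real" where
  "top_rank_prob s n = (case s of
      Exponential \<Rightarrow> 1/8
    | PowerLaw \<Rightarrow> 1/18
    | Harmonic \<Rightarrow> 1 / (3 * (ln (real n + 1) + 1))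
    | Tournament \<Rightarrow> exp (-9) / 27)"

lemma top_rank_prob_pos: "0 < top_rank_prob s n"
  by (cases s) (auto simp: top_rank_prob_def intro!: add_nonneg_pos)

lemma rank_index_pmf_ranking:
  "s \<noteq> Tournament \<Longrightarrow> rank_index_pmf s \<mu> = ranking_pmf (rank_weight s) \<mu>"
  by (cases s) (simp_all add: rank_index_pmf_def)

lemma top_rank_prob_le_pmf_ranking:
  assumes "s \<noteq> Tournament" "\<mu> \<le> n + 1" "i \<le> 2" "i < \<mu>"
  shows "top_rank_prob s n \<le> pmf (ranking_pmf (rank_weight s) \<mu>) i"
proof (cases s)
  case Exponential
  have "top_rank_prob Exponential n = (1/2) ^ 3 / 1"
    by (simp add: top_rank_prob_def power3_eq_cube)
  also have "\<dots> \<le> rank_weight Exponential (Suc i) / 1"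
    using assms by (simp add: rank_weight_def power_decreasing del: power_Suc)
  also have "\<dots> \<le> pmf (ranking_pmf (rank_weight Exponential) \<mu>) i"
    using assms sum_power_half[of \<mu>]
    by (intro pmf_ranking_pmf_ge) (auto simp: rank_weight_def power_less_one_iff)
  finally show ?thesis
    unfolding Exponential .
next
  case PowerLaw
  have "top_rank_prob PowerLaw n = 1 / 3 ^ 2 / 2"
    by (simp add: top_rank_prob_def)
  also have "\<dots> \<le> rank_weight PowerLaw (Suc i) / 2"
    using assms power_mono[of "real (Suc i)" 3 2]
    by (simp add: rank_weight_def divide_right_mono divide_left_mono del: of_nat_Suc)
  also have "\<dots> \<le> pmf (ranking_pmf (rank_weight PowerLaw) \<mu>) i"
    using assms sum_inverse_squares_le_2[of \<mu>]
    by (intro pmf_ranking_pmf_ge) (auto simp: rank_weight_def intro!: sum_pos2[of _ 1])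
  finally show ?thesis
    unfolding PowerLaw .
next
  case Harmonic
  have "top_rank_prob Harmonic n = 1 / 3 / (ln (real n + 1) + 1)"
    by (simp add: top_rank_prob_def)
  also have "\<dots> \<le> 1 / real (Suc i) / (ln (real n + 1) + 1)"
    using assms by (intro divide_right_mono divide_left_mono) auto
  also have "\<dots> = rank_weight Harmonic (Suc i) / (ln (real n + 1) + 1)"
    by (simp add: rank_weight_def)
  also have "\<dots> \<le> pmf (ranking_pmf (rank_weight Harmonic) \<mu>) i"
    using assms sum_inverse_le_ln[of \<mu> n]
    by (intro pmf_ranking_pmf_ge) (auto simp: rank_weight_def intro!: sum_pos2[of _ 1])
  finally show ?thesis
    unfolding Harmonic .
qed (use assms in simp)

lemma top_rank_prob_le_pmf_rank_index:
  assumes "\<mu> \<le> n + 1" "i \<le> 2" "i < \<mu>"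
  shows "top_rank_prob s n \<le> pmf (rank_index_pmf s \<mu>) i"
proof (cases "s = Tournament")
  case True
  then show ?thesis
    using assms tournament_lower_bound[of i \<mu>]
    by (simp add: top_rank_prob_def rank_index_pmf_def pmf_min_of_draws)
qed (use assms in \<open>simp add: rank_index_pmf_ranking top_rank_prob_le_pmf_ranking\<close>)

lemma rank_index_less:
  assumes "0 < \<mu>" "i \<in> set_pmf (rank_index_pmf s \<mu>)"
  shows "i < \<mu>"
proof (cases "s = Tournament")
  case True
  have "i \<in> set_pmf (min_of_draws k \<mu>) \<Longrightarrow> 0 < k \<Longrightarrow> i < \<mu>" for k
    using assms(1) by (induction k arbitrary: i) (auto simp: lessThan_empty_iff min_def split: if_splits)
  then show ?thesis
    using True assms by (simp add: rank_index_pmf_def)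
next
  case False
  have "0 \<le> rank_weight s j" for j
    by (cases s) (auto simp: rank_weight_def)
  moreover have "0 < (\<Sum>j=1..\<mu>. rank_weight s j)"
    using False assms(1) by (intro sum_pos2[of _ 1]) (auto simp: rank_weight_def split: selection.split)
  ultimately have "pmf (rank_index_pmf s \<mu>) i
      = (if i < \<mu> then rank_weight s (Suc i) / (\<Sum>j=1..\<mu>. rank_weight s j) else 0)"
    by (simp add: rank_index_pmf_ranking[OF False] pmf_ranking_pmf)
  then show ?thesis
    using assms(2) by (auto simp: set_pmf_iff split: if_splits)
qed

section \<open>Good individuals among the best ranks\<close>

lemma score_ranking_population:
  assumes "is_score_ranking sc rk" "population n (OneMinMax n) P"
  shows "distinct (rk P)" "set (rk P) = P" "sorted_wrt (\<lambda>x y. sc P x \<ge> sc P y) (rk P)"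
    "length (rk P) = card P"
proof -
  have "finite P"
    using assms(2) finite_cube finite_subset by (auto simp: population_OneMinMax_iff)
  then show "distinct (rk P)" "set (rk P) = P" "sorted_wrt (\<lambda>x y. sc P x \<ge> sc P y) (rk P)"
    using assms(1) by (simp_all add: is_score_ranking_def)
  then show "length (rk P) = card P"
    using distinct_card by fastforce
qed

lemma sorted_ranking_first_index_le:
  fixes sc :: "'a \<Rightarrow> 'b::linorder"
  assumes L: "distinct L" "sorted_wrt (\<lambda>x y. sc x \<ge> sc y) L" and "finite E"
    and G: "i < length L" "G (L ! i)"
    and above: "\<And>x y. x \<in> set L \<Longrightarrow> y \<in> set L \<Longrightarrow> x \<notin> E \<Longrightarrow> \<not> G x \<Longrightarrow> G y \<Longrightarrow> sc x < sc y"
  obtains k where "k \<le> card E" "k < length L" "G (L ! k)"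
proof -
  define k where "k = (LEAST k. k < length L \<and> G (L ! k))"
  have k: "k < length L" "G (L ! k)"
    using LeastI[of "\<lambda>k. k < length L \<and> G (L ! k)", OF conjI[OF G]] by (simp_all add: k_def)
  have "L ! l \<in> E" if "l < k" for l
  proof (rule ccontr)
    assume "L ! l \<notin> E"
    moreover have "\<not> G (L ! l)"
      using not_less_Least[of l "\<lambda>k. k < length L \<and> G (L ! k)"] that k by (simp add: k_def)
    ultimately have "sc (L ! l) < sc (L ! k)"
      using that k by (intro above) auto
    moreover have "sc (L ! l) \<ge> sc (L ! k)"
      using L(2) that k by (simp add: sorted_wrt_iff_nth_less)
    ultimately show False
      by simp
  qed
  then have "(!) L ` {..<k} \<subseteq> E"
    by auto
  moreover have "inj_on ((!) L) {..<k}"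
    using L(1) k by (simp add: inj_on_def nth_eq_iff_index_eq)
  ultimately have "k \<le> card E"
    using \<open>finite E\<close> card_inj_on_le by fastforce
  with k show thesis
    using that by blast
qed

lemma interval_subset_if_closed:
  fixes n :: nat
  assumes "k \<in> K" "0 < k" "k < n"
    and closed: "\<And>k. k \<in> K \<Longrightarrow> 0 < k \<Longrightarrow> k < n \<Longrightarrow> k - 1 \<in> K \<and> k + 1 \<in> K"
  shows "{0..n} \<subseteq> K"
proof
  fix j assume "j \<in> {0..n}"
  show "j \<in> K"
  proof (cases "j \<le> k")
    case True
    then show ?thesis
    proof (induction rule: inc_induct)
      case (step m)
      then show ?case
        using closed[of "Suc m"] assms(3) by simp
    qed (use assms in simp)
  next
    case False
    then have "k \<le> j" "j \<le> n"
      using \<open>j \<in> {0..n}\<close> by auto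
    then show ?thesis
    proof (induction rule: dec_induct)
      case (step m)
      then show ?case
        using closed[of m] assms(2) by simp
    qed (use assms in simp)
  qed
qed

lemma ones_image_subset_extremes:
  assumes P: "P \<subseteq> cube n" and not_covered: "ones ` P \<noteq> {0..n}"
    and interior_bad: "\<And>x. x \<in> P \<Longrightarrow> 0 < ones x \<Longrightarrow> ones x < n \<Longrightarrow> \<not> good n (OneMinMax n) P x"
  shows "ones ` P \<subseteq> {0, n}"
proof (rule ccontr)
  have le_n: "ones ` P \<subseteq> {0..n}"
    using P ones_le_length by (fastforce simp: cube_def)
  assume "\<not> ones ` P \<subseteq> {0, n}"
  then obtain k where "k \<in> ones ` P" "0 < k" "k < n"
    using le_n by fastforce
  then have "{0..n} \<subseteq> ones ` P"
  proof (rule interval_subset_if_closed)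
    fix k assume k: "k \<in> ones ` P" "0 < k" "k < n"
    then obtain x where x: "x \<in> P" "ones x = k"
      by blast
    have no_gap: "j \<in> ones ` P" if "j \<le> n" "j + 1 = k \<or> j = k + 1" for j
      using interior_bad[OF x(1)] good_OneMinMax_iff[OF P, of x] x k that by auto
    show "k - 1 \<in> ones ` P \<and> k + 1 \<in> ones ` P"
      using no_gap[of "k - 1"] no_gap[of "k + 1"] k by simp
  qed
  with le_n not_covered show False
    by blast
qed

lemma good_if_ones_image_subset_extremes:
  assumes "2 \<le> n" "P \<subseteq> cube n" "ones ` P \<subseteq> {0, n}" "x \<in> P"
  shows "good n (OneMinMax n) P x"
proof -
  have gaps: "1 \<notin> ones ` P" "n - 1 \<notin> ones ` P"
    using assms by (auto dest!: subsetD)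
  obtain j where "j \<le> n" "j \<notin> ones ` P" "j + 1 = ones x \<or> j = ones x + 1"
  proof (cases "ones x = 0")
    case True
    then show thesis
      using that[of 1] gaps assms(1) by auto
  next
    case False
    then have "ones x = n"
      using assms by auto
    then show thesis
      using that[of "n - 1"] gaps assms(1) by auto
  qed
  then show ?thesis
    using assms good_OneMinMax_iff[of P n x] by blast
qed

lemma good_non_extreme_in_top_ranks:
  assumes df: "diversity_favouring n (OneMinMax n) (cube n - {replicate n False, replicate n True}) sc"
    and rk: "is_score_ranking sc rk" and pop: "population n (OneMinMax n) P"
    and y: "y \<in> P" "y \<notin> {replicate n False, replicate n True}" "good n (OneMinMax n) P y"
  obtains i where "i \<le> 2" "i < card P" "good n (OneMinMax n) P (rk P ! i)"
proof -
  define E where "E = {replicate n False, replicate n True}"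
  define G where "G x \<longleftrightarrow> x \<notin> E \<and> good n (OneMinMax n) P x" for x
  note L = score_ranking_population[OF rk pop]
  have "P \<subseteq> cube n"
    using pop by (simp add: population_OneMinMax_iff)
  obtain i where i: "i < length (rk P)" "G (rk P ! i)"
    using y L(2) unfolding G_def E_def by (metis in_set_conv_nth)
  have above: "sc P x < sc P y"
    if "x \<in> set (rk P)" "y \<in> set (rk P)" "x \<notin> E" "\<not> G x" "G y" for x y
    using that df pop L(2) \<open>P \<subseteq> cube n\<close>
    unfolding diversity_favouring_def bad_def pareto_set_OneMinMax E_def G_def by blast
  have "finite E"
    by (simp add: E_def)
  obtain k where "k \<le> card E" "k < length (rk P)" "G (rk P ! k)"
    by (rule sorted_ranking_first_index_le[where G = G, OF L(1,3) \<open>finite E\<close> i above])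
  moreover have "card E \<le> 2"
    by (simp add: E_def card_insert_le_m1)
  ultimately show thesis
    using that[of k] L(4) by (simp add: G_def)
qed

lemma good_in_top_ranks:
  assumes "2 \<le> n"
    and df: "diversity_favouring n (OneMinMax n) (cube n - {replicate n False, replicate n True}) sc"
    and rk: "is_score_ranking sc rk"
    and pop: "population n (OneMinMax n) P"
    and not_covered: "\<not> covers_front n (OneMinMax n) P"
  obtains i where "i \<le> 2" "i < card P" "good n (OneMinMax n) P (rk P ! i)"
proof (cases "\<exists>y\<in>P. y \<notin> {replicate n False, replicate n True} \<and> good n (OneMinMax n) P y")
  case True
  then obtain y where "y \<in> P" "y \<notin> {replicate n False, replicate n True}" "good n (OneMinMax n) P y"
    by blast
  from good_non_extreme_in_top_ranks[OF df rk pop this that] show thesis .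
next
  case False
  have P: "P \<noteq> {}" "P \<subseteq> cube n" "finite P"
    using pop finite_cube finite_subset by (auto simp: population_OneMinMax_iff)
  have "ones ` P \<subseteq> {0, n}"
  proof (rule ones_image_subset_extremes[OF P(2)])
    show "ones ` P \<noteq> {0..n}"
      using not_covered covers_front_OneMinMax_iff[OF P(2)] by simp
    fix x assume "x \<in> P" "0 < ones x" "ones x < n"
    then show "\<not> good n (OneMinMax n) P x"
      using False by (auto simp: ones_replicate)
  qed
  moreover have "0 < card P"
    using P by (simp add: card_gt_0_iff)
  moreover from this have "rk P ! 0 \<in> P"
    using score_ranking_population(2,4)[OF rk pop] nth_mem by fastforce
  ultimately show thesis
    using that[of 0] good_if_ones_image_subset_extremes[OF assms(1) P(2)] by simp
qed

section \<open>Drift of the potential\<close>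

lemma step_support:
  assumes rk: "is_score_ranking sc rk" and pop: "population n (OneMinMax n) P"
    and Q: "Q \<in> set_pmf (step m s n (OneMinMax n) rk P)"
  obtains z where "z \<in> cube n" "Q = update (OneMinMax n) P z"
proof -
  have P: "P \<noteq> {}" "P \<subseteq> cube n" "finite P"
    using pop finite_cube finite_subset by (auto simp: population_OneMinMax_iff)
  from Q obtain i z where i: "i \<in> set_pmf (rank_index_pmf s (card P))"
      and z: "z \<in> set_pmf (mutate m n (rk P ! i))" and "Q = update (OneMinMax n) P z"
    by (auto simp: step_def)
  moreover have "rk P ! i \<in> P"
    using rank_index_less[OF _ i] P score_ranking_population[OF rk pop]
    by (metis card_gt_0_iff nth_mem)
  then have "z \<in> cube n"
    using z P(2) length_mutate by (auto simp: cube_def)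
  ultimately show thesis
    using that by blast
qed

lemma prob_step_covers_level_ge:
  assumes n: "2 \<le> n" and rk: "is_score_ranking sc rk" and pop: "population n (OneMinMax n) P"
    and i: "i \<le> 2" "i < card P"
    and j: "j \<le> n" "j + 1 = ones (rk P ! i) \<or> j = ones (rk P ! i) + 1"
  shows "top_rank_prob s n * (flips_to_level n j / (exp 1 * n))
    \<le> measure_pmf.prob (step m s n (OneMinMax n) rk P) {Q. j \<in> ones ` Q}"
proof -
  define x where "x = rk P ! i"
  define R where "R = rank_index_pmf s (card P)"
  define K where "K = (\<lambda>y. map_pmf (update (OneMinMax n) P) (mutate m n y))"
  have "x \<in> P"
    using i score_ranking_population[OF rk pop] nth_mem by (metis x_def)
  then have "length x = n"
    using pop by (auto simp: population_OneMinMax_iff cube_def)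
  have "top_rank_prob s n \<le> pmf R i"
    unfolding R_def using i card_population_le[OF pop] by (intro top_rank_prob_le_pmf_rank_index)
  also have "\<dots> \<le> pmf (map_pmf ((!) (rk P)) R) x"
    unfolding x_def by (rule pmf_map_pmf_ge)
  finally have sel: "top_rank_prob s n \<le> pmf (map_pmf ((!) (rk P)) R) x" .
  have "flips_to_level n j / (exp 1 * n) \<le> measure_pmf.prob (mutate m n x) {z. ones z = j}"
    using n j \<open>length x = n\<close> by (intro prob_mutate_level_ge) (auto simp: x_def)
  also have "\<dots> \<le> measure_pmf.prob (K x) {Q. j \<in> ones ` Q}"
    by (auto simp: K_def ones_image_update intro!: measure_pmf.finite_measure_mono)
  finally have hit: "flips_to_level n j / (exp 1 * n) \<le> measure_pmf.prob (K x) {Q. j \<in> ones ` Q}" .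
  have "top_rank_prob s n * (flips_to_level n j / (exp 1 * n))
      \<le> pmf (map_pmf ((!) (rk P)) R) x * measure_pmf.prob (K x) {Q. j \<in> ones ` Q}"
    using sel hit top_rank_prob_pos[of s n] by (intro mult_mono) auto
  also have "\<dots> \<le> measure_pmf.prob (bind_pmf (map_pmf ((!) (rk P)) R) K) {Q. j \<in> ones ` Q}"
    by (rule prob_bind_pmf_ge)
  finally show ?thesis
    by (simp add: step_def R_def K_def)
qed

definition potential :: "selection \<Rightarrow> nat \<Rightarrow> pop \<Rightarrow> real" where
  "potential s n P = exp 1 * real n / top_rank_prob s n * (\<Sum>j\<in>{0..n} - ones ` P. 1 / real (flips_to_level n j))"

lemma potential_nonneg: "0 \<le> potential s n P"
  using top_rank_prob_pos[of s n] by (simp add: potential_def sum_nonneg)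

lemma potential_le: "potential s n P \<le> exp 1 * real n / top_rank_prob s n * (\<Sum>j=0..n. 1 / real (flips_to_level n j))"
  unfolding potential_def using top_rank_prob_pos[of s n]
  by (intro mult_left_mono sum_mono2) auto

lemma potential_decrease:
  assumes "ones ` P \<subseteq> ones ` Q" "j \<in> {0..n} - ones ` P"
  shows "potential s n Q + exp 1 * real n / top_rank_prob s n / real (flips_to_level n j) * indicator {Q. j \<in> ones ` Q} Q
    \<le> potential s n P"
proof -
  define f where "f j = 1 / real (flips_to_level n j)" for j
  have "(\<Sum>k\<in>{0..n} - ones ` Q. f k) + f j * indicator {Q. j \<in> ones ` Q} Q \<le> (\<Sum>k\<in>{0..n} - ones ` P. f k)"
  proof (cases "j \<in> ones ` Q")
    case True
    have "(\<Sum>k\<in>{0..n} - ones ` Q. f k) \<le> (\<Sum>k\<in>{0..n} - ones ` P - {j}. f k)"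
      using assms True by (intro sum_mono2) (auto simp: f_def)
    then show ?thesis
      using True assms(2) by (simp add: sum_diff1)
  next
    case False
    then show ?thesis
      using assms(1) by (auto simp: f_def intro!: sum_mono2)
  qed
  then have "exp 1 * real n / top_rank_prob s n * ((\<Sum>k\<in>{0..n} - ones ` Q. f k) + f j * indicator {Q. j \<in> ones ` Q} Q)
      \<le> exp 1 * real n / top_rank_prob s n * (\<Sum>k\<in>{0..n} - ones ` P. f k)"
    using top_rank_prob_pos[of s n] by (intro mult_left_mono) auto
  then show ?thesis
    by (simp add: potential_def f_def algebra_simps)
qed

lemma potential_step_le:
  fixes s :: selection
  assumes rk: "is_score_ranking sc rk" and pop: "population n (OneMinMax n) P"
    and j: "j \<in> {0..n} - ones ` P"
  defines "w \<equiv> exp 1 * real n / top_rank_prob s n / real (flips_to_level n j)"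
  shows "(\<integral>\<^sup>+Q. potential s n Q \<partial>step m s n (OneMinMax n) rk P)
      + ennreal w * emeasure (step m s n (OneMinMax n) rk P) {Q. j \<in> ones ` Q} \<le> potential s n P"
proof -
  let ?S = "step m s n (OneMinMax n) rk P"
  define A where "A = {Q. j \<in> ones ` Q}"
  have w: "0 \<le> w"
    using top_rank_prob_pos[of s n] by (simp add: w_def)
  have "(\<integral>\<^sup>+Q. potential s n Q \<partial>?S) + ennreal w * emeasure ?S A
      = (\<integral>\<^sup>+Q. ennreal (potential s n Q + w * indicator A Q) \<partial>?S)"
    using w potential_nonneg
    by (simp add: nn_integral_add nn_integral_cmult_indicator ennreal_mult ennreal_indicator)
  also have "\<dots> \<le> (\<integral>\<^sup>+Q. potential s n P \<partial>?S)"
  proof (rule nn_integral_mono_AE)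
    show "AE Q in ?S. ennreal (potential s n Q + w * indicator A Q) \<le> potential s n P"
      unfolding AE_measure_pmf_iff
    proof
      fix Q assume "Q \<in> set_pmf ?S"
      then obtain z where "Q = update (OneMinMax n) P z"
        using step_support[OF rk pop] by blast
      then show "ennreal (potential s n Q + w * indicator A Q) \<le> potential s n P"
        unfolding w_def A_def using j by (intro ennreal_leI potential_decrease) (auto simp: ones_image_update)
    qed
  qed
  also have "\<dots> = potential s n P"
    by (simp add: measure_pmf.emeasure_space_1)
  finally show ?thesis
    by (simp add: A_def)
qed

lemma potential_drift:
  assumes n: "2 \<le> n"
    and df: "diversity_favouring n (OneMinMax n) (cube n - {replicate n False, replicate n True}) sc"
    and rk: "is_score_ranking sc rk" and pop: "population n (OneMinMax n) P"
    and not_covered: "\<not> covers_front n (OneMinMax n) P"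
  shows "(\<integral>\<^sup>+Q. potential s n Q \<partial>step m s n (OneMinMax n) rk P) + 1 \<le> potential s n P"
proof -
  let ?S = "step m s n (OneMinMax n) rk P"
  obtain i where i: "i \<le> 2" "i < card P" "good n (OneMinMax n) P (rk P ! i)"
    by (rule good_in_top_ranks[OF n df rk pop not_covered])
  then obtain j where j: "j \<le> n" "j \<notin> ones ` P" "j + 1 = ones (rk P ! i) \<or> j = ones (rk P ! i) + 1"
    using good_OneMinMax_iff pop by (auto simp: population_OneMinMax_iff)
  define w where "w = exp 1 * real n / top_rank_prob s n / real (flips_to_level n j)"
  have w: "0 \<le> w"
    using top_rank_prob_pos[of s n] by (simp add: w_def)
  have "1 = w * (top_rank_prob s n * (flips_to_level n j / (exp 1 * n)))"
    using top_rank_prob_pos[of s n] n j(1) by (simp add: w_def flips_to_level_def)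
  also have "\<dots> \<le> w * measure_pmf.prob ?S {Q. j \<in> ones ` Q}"
    using prob_step_covers_level_ge[OF n rk pop i(1,2) j(1,3)] w by (rule mult_left_mono)
  finally have "1 \<le> ennreal w * emeasure ?S {Q. j \<in> ones ` Q}"
    using w by (simp add: measure_pmf.emeasure_eq_measure ennreal_mult[symmetric])
  then have "(\<integral>\<^sup>+Q. potential s n Q \<partial>?S) + 1
      \<le> (\<integral>\<^sup>+Q. potential s n Q \<partial>?S) + ennreal w * emeasure ?S {Q. j \<in> ones ` Q}"
    by (rule add_left_mono)
  also have "\<dots> \<le> potential s n P"
    using potential_step_le[OF rk pop] j by (simp add: w_def)
  finally show ?thesis .
qed

section \<open>Runtime\<close>

lemma expected_time_le_potential_bound:
  assumes n: "2 \<le> n"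
    and df: "diversity_favouring n (OneMinMax n) (cube n - {replicate n False, replicate n True}) sc"
    and rk: "is_score_ranking sc rk"
  shows "expected_time m s n (OneMinMax n) rk
    \<le> ennreal (exp 1 * real n / top_rank_prob s n * (\<Sum>j=0..n. 1 / real (flips_to_level n j)))"
  unfolding expected_time_def pop_dist_def
proof (rule additive_drift_hitting_time[where I = "population n (OneMinMax n)" and \<Phi> = "\<lambda>P. potential s n P"])
  fix P assume "P \<in> set_pmf (init_pop n)"
  moreover have "cube n \<noteq> {}"
    using ones_image_cube[of n] by auto
  ultimately show "population n (OneMinMax n) P"
    using finite_cube[of n] by (auto simp: init_pop_def population_OneMinMax_iff)
next
  fix P Q assume pop: "population n (OneMinMax n) P"
    and Q: "Q \<in> set_pmf (stopped_step m s n (OneMinMax n) rk P)"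
  show "population n (OneMinMax n) Q"
  proof (cases "covers_front n (OneMinMax n) P")
    case False
    with Q have "Q \<in> set_pmf (step m s n (OneMinMax n) rk P)"
      by (simp add: stopped_step_def)
    then obtain z where "z \<in> cube n" "Q = update (OneMinMax n) P z"
      by (rule step_support[OF rk pop])
    then show ?thesis
      using population_update[OF pop] by simp
  qed (use Q pop in \<open>simp add: stopped_step_def\<close>)
next
  fix P assume "population n (OneMinMax n) P" "\<not> covers_front n (OneMinMax n) P"
  then show "(\<integral>\<^sup>+Q. potential s n Q \<partial>stopped_step m s n (OneMinMax n) rk P) + 1 \<le> potential s n P"
    using potential_drift[OF n df rk] by (simp add: stopped_step_def)
next
  fix P assume "covers_front n (OneMinMax n) P"
  then show "(\<integral>\<^sup>+Q. potential s n Q \<partial>stopped_step m s n (OneMinMax n) rk P) \<le> potential s n P"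
    by (simp add: stopped_step_def)
qed (intro ennreal_leI potential_le)

lemma sum_inverse_flips_to_level_le: "(\<Sum>j=0..n. 1 / real (flips_to_level n j)) \<le> 2 * harm (n + 1)"
proof -
  have "(\<Sum>j=0..n. 1 / real (flips_to_level n j)) \<le> (\<Sum>j=0..n. 1 / real (j + 1) + 1 / real (n + 1 - j))"
    by (intro sum_mono) (auto simp: flips_to_level_def min_def)
  also have "\<dots> = (\<Sum>j=0..n. 1 / real (j + 1)) + (\<Sum>j=0..n. 1 / real (n + 1 - j))"
    by (rule sum.distrib)
  also have "(\<Sum>j=0..n. 1 / real (n + 1 - j)) = (\<Sum>j=0..n. 1 / real (j + 1))"
    by (rule sum.reindex_bij_witness[of _ "\<lambda>j. n - j" "\<lambda>j. n - j"]) auto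
  also have "(\<Sum>j=0..n. 1 / real (j + 1)) = harm (n + 1)"
    unfolding harm_altdef by (intro sum.cong) (auto simp: field_simps)
  finally show ?thesis
    by simp
qed

lemma ln_Suc_plus_1_le: "3 \<le> n \<Longrightarrow> ln (real n + 1) + 1 \<le> 3 * ln (real n)"
proof -
  assume n: "3 \<le> n"
  then have "exp 1 \<le> real n"
    using exp_le by linarith
  then have "1 \<le> ln (real n)"
    using n by (subst ln_ge_iff) auto
  moreover have "ln (real n + 1) \<le> ln (2 * real n)"
    using n by simp
  moreover have "ln (2 * real n) = ln 2 + ln (real n)"
    using n by (simp add: ln_mult)
  moreover have "ln 2 \<le> ln (real n)"
    using n by simp
  ultimately show ?thesis
    by linarith
qed

lemma expected_time_le_n_ln:
  assumes n: "3 \<le> n"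
    and df: "diversity_favouring n (OneMinMax n) (cube n - {replicate n False, replicate n True}) sc"
    and rk: "is_score_ranking sc rk"
  shows "expected_time m s n (OneMinMax n) rk \<le> ennreal (6 * exp 1 / top_rank_prob s n * real n * ln (real n))"
proof -
  have "harm (n + 1) \<le> 3 * ln (real n)"
    using harm_le_ln_plus_1[of "n + 1"] ln_Suc_plus_1_le[OF n] by (simp add: add.commute)
  then have "(\<Sum>j=0..n. 1 / real (flips_to_level n j)) \<le> 6 * ln (real n)"
    using sum_inverse_flips_to_level_le[of n] by linarith
  then have "exp 1 * real n / top_rank_prob s n * (\<Sum>j=0..n. 1 / real (flips_to_level n j))
      \<le> exp 1 * real n / top_rank_prob s n * (6 * ln (real n))"
    using top_rank_prob_pos[of s n] by (intro mult_left_mono) auto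
  then show ?thesis
    using expected_time_le_potential_bound[OF _ df rk, of m s] n
    by (auto simp: mult_ac elim!: order_trans intro!: ennreal_leI)
qed

lemma expected_time_Harmonic_le:
  assumes n: "3 \<le> n"
    and df: "diversity_favouring n (OneMinMax n) (cube n - {replicate n False, replicate n True}) sc"
    and rk: "is_score_ranking sc rk"
  shows "expected_time m Harmonic n (OneMinMax n) rk \<le> ennreal (54 * exp 1 * real n * ln (real n) ^ 2)"
proof -
  have "6 * exp 1 / top_rank_prob Harmonic n * real n * ln (real n)
      = 18 * exp 1 * real n * ln (real n) * (ln (real n + 1) + 1)"
    by (simp add: top_rank_prob_def)
  also have "\<dots> \<le> 18 * exp 1 * real n * ln (real n) * (3 * ln (real n))"
    using ln_Suc_plus_1_le[OF n] n by (intro mult_left_mono) auto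
  finally show ?thesis
    using expected_time_le_n_ln[OF n df rk, of m Harmonic]
    by (auto simp: power2_eq_square mult_ac elim!: order_trans intro!: ennreal_leI)
qed

theorem theorem3:
  fixes score :: "nat \<Rightarrow> bool list set \<Rightarrow> bool list \<Rightarrow> ereal"
    and rk :: "nat \<Rightarrow> bool list set \<Rightarrow> bool list list"
  assumes div_fav: "\<forall>n\<ge>2. diversity_favouring n (OneMinMax n)
                      (cube n - {replicate n False, replicate n True}) (score n)"
    and ranking: "\<forall>n. is_score_ranking (score n) (rk n)"
  shows "(\<forall>m. \<forall>s \<in> {Exponential, PowerLaw, Tournament}. \<exists>C::real.
           \<forall>\<^sub>F n in sequentially.
             expected_time m s n (OneMinMax n) (rk n) \<le> ennreal (C * real n * ln (real n))) \<and>
         (\<forall>m. \<exists>C::real.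
           \<forall>\<^sub>F n in sequentially.
             expected_time m Harmonic n (OneMinMax n) (rk n) \<le> ennreal (C * real n * (ln (real n))^2))"
proof -
  have df: "diversity_favouring n (OneMinMax n) (cube n - {replicate n False, replicate n True}) (score n)"
    and rk: "is_score_ranking (score n) (rk n)" if "3 \<le> n" for n
    using div_fav ranking that by simp_all
  have "\<forall>\<^sub>F n in sequentially. expected_time m s n (OneMinMax n) (rk n)
      \<le> ennreal (6 * exp 1 / top_rank_prob s 0 * real n * ln (real n))"
    if "s \<in> {Exponential, PowerLaw, Tournament}" for m s
  proof (rule eventually_mono[OF eventually_ge_at_top[of 3]])
    fix n :: nat assume n: "3 \<le> n"
    have "top_rank_prob s n = top_rank_prob s 0"
      using that by (auto simp: top_rank_prob_def)
    then show "expected_time m s n (OneMinMax n) (rk n)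
        \<le> ennreal (6 * exp 1 / top_rank_prob s 0 * real n * ln (real n))"
      using expected_time_le_n_ln[OF n df[OF n] rk[OF n], of m s] by simp
  qed
  moreover have "\<forall>\<^sub>F n in sequentially.
      expected_time m Harmonic n (OneMinMax n) (rk n) \<le> ennreal (54 * exp 1 * real n * ln (real n) ^ 2)" for m
    using eventually_ge_at_top[of 3] by (rule eventually_mono) (use expected_time_Harmonic_le df rk in blast)
  ultimately show ?thesis
    by blast
qed

end
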